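(* Let $P$ be a finite lattice and $R\in\mathrm{Tr}(P)$. The fiber $\chi^{-1}\{\chi^R\}$ of $\chi\colon\mathrm{Tr}(P)\to\mathrm{End}^\circ(P)$ has a least element, namely $$\tilde R=\langle\{(x,y)\in P\times P: \chi^R(y)=x\text{ or }x=y\}\rangle.$$
   Context: For a finite lattice $(P,\le)$, a transfer system on $P$ is a partial order $R$ on $P$ refining $\le$ (i.e. $x\,R\,y\Rightarrow x\le y$) that is closed under restriction: if $x\,R\,z$ and $y\le z$ then $(x\wedge y)\,R\,y$. $\mathrm{Tr}(P)$ is the set of transfer systems ordered by inclusion of relations. For a set $Q$ of pairs $(x,y)$ with $x\le y$, $\langle Q\rangle$ is the transfer system generated by $Q$, i.e. the intersection of all transfer systems containing $Q$. For $R\in\mathrm{Tr}(P)$, $\chi^R(x)$ is the least element of $\{y: y\,R\,x\}$ (which exists). $\mathrm{End}^\circ(P)$ is the set of interior operators (monotone $f$ with $f(x)\le x$, $f\circ f=f$), and $\chi\colon R\mapsto\chi^R$ lands in it. *)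

theory Defs
  imports Main "HOL-Library.Finite_Lattice"
begin

definition transfer_system :: "('a::finite_lattice) rel \<Rightarrow> bool" where
  "transfer_system R \<longleftrightarrow>
     refl R \<and> antisym R \<and> trans R \<and>
     (\<forall>x y. (x, y) \<in> R \<longrightarrow> x \<le> y) \<and>
     (\<forall>x y z. (x, z) \<in> R \<and> y \<le> z \<longrightarrow> (inf x y, y) \<in> R)"

definition Tr :: "('a::finite_lattice) rel set" where
  "Tr = {R. transfer_system R}"

definition gen_tr :: "('a::finite_lattice) rel \<Rightarrow> 'a rel" where
  "gen_tr Q = \<Inter> {R. transfer_system R \<and> Q \<subseteq> R}"

definition chi :: "('a::finite_lattice) rel \<Rightarrow> 'a \<Rightarrow> 'a" where
  "chi R x = (THE y. (y, x) \<in> R \<and> (\<forall>z. (z, x) \<in> R \<longrightarrow> y \<le> z))"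

end

theory Submission
  imports Defs
begin

text \<open>Every transfer system \<open>S\<close> contains the pairs \<open>(chi S y, y)\<close> and the diagonal, so the
  generators of \<open>Rt\<close> lie in every \<open>S\<close> with \<open>chi S = chi R\<close>, and hence so does \<open>Rt\<close>, in
  particular \<open>Rt \<subseteq> R\<close>. Squeezed between its generators and \<open>R\<close>, \<open>Rt\<close> contains
  \<open>(chi R x, x)\<close> but nothing smaller over \<open>x\<close>, so \<open>chi Rt = chi R\<close>.\<close>

lemma transfer_system_refl: "transfer_system R \<Longrightarrow> (x, x) \<in> R"
  unfolding transfer_system_def refl_on_def by blast

lemma transfer_system_le: "transfer_system R \<Longrightarrow> (x, y) \<in> R \<Longrightarrow> x \<le> y"
  unfolding transfer_system_def by blast

lemma transfer_system_trans: "transfer_system R \<Longrightarrow> (x, y) \<in> R \<Longrightarrow> (y, z) \<in> R \<Longrightarrow> (x, z) \<in> R"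
  unfolding transfer_system_def trans_def by blast

lemma transfer_system_restrict:
  "transfer_system R \<Longrightarrow> (x, z) \<in> R \<Longrightarrow> y \<le> z \<Longrightarrow> (inf x y, y) \<in> R"
  unfolding transfer_system_def by blast

lemma transfer_system_has_least_below:
  fixes R :: "('a::finite_lattice) rel"
  assumes R: "transfer_system R"
  obtains m where "(m, x) \<in> R" and "\<And>z. (z, x) \<in> R \<Longrightarrow> m \<le> z"
proof -
  have "finite {y. (y, x) \<in> R}" and "x \<in> {y. (y, x) \<in> R}"
    using transfer_system_refl[OF R] by auto
  then obtain m where m: "(m, x) \<in> R" and minimal: "\<And>b. (b, x) \<in> R \<Longrightarrow> b \<le> m \<Longrightarrow> m = b"
    using finite_has_minimal[of "{y. (y, x) \<in> R}"] by auto
  have "m \<le> z" if z: "(z, x) \<in> R" for z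
  proof -
    \<comment> \<open>restrict \<open>(m, x)\<close> along \<open>z \<le> x\<close>, then compose with \<open>(z, x)\<close>; minimality of \<open>m\<close> does the rest\<close>
    have "(inf m z, z) \<in> R"
      using transfer_system_restrict[OF R m transfer_system_le[OF R z]] .
    then have "(inf m z, x) \<in> R" using transfer_system_trans[OF R _ z] by blast
    then have "m = inf m z" using minimal by simp
    then show "m \<le> z" by (metis inf.cobounded2)
  qed
  with m show thesis using that by blast
qed

lemma chi_eqI:
  assumes "(m, x) \<in> R" and "\<And>z. (z, x) \<in> R \<Longrightarrow> m \<le> z"
  shows "chi R x = m"
  unfolding chi_def
proof (rule the_equality)
  fix y assume "(y, x) \<in> R \<and> (\<forall>z. (z, x) \<in> R \<longrightarrow> y \<le> z)"
  with assms show "y = m" by (blast intro: order_antisym)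
qed (use assms in blast)

lemma
  fixes R :: "('a::finite_lattice) rel"
  assumes "transfer_system R"
  shows chi_mem: "(chi R x, x) \<in> R"
    and chi_le: "(z, x) \<in> R \<Longrightarrow> chi R x \<le> z"
proof -
  obtain m where "(m, x) \<in> R" and "\<And>y. (y, x) \<in> R \<Longrightarrow> m \<le> y"
    using transfer_system_has_least_below[OF assms, of x] by blast
  moreover from this have "chi R x = m" by (rule chi_eqI)
  ultimately show "(chi R x, x) \<in> R" and "(z, x) \<in> R \<Longrightarrow> chi R x \<le> z" by simp_all
qed

lemma chi_eq_if_between:
  fixes S T :: "('a::finite_lattice) rel"
  assumes S: "transfer_system S" and T: "transfer_system T" and "S \<subseteq> T"
    and chi_T_mem: "\<And>x. (chi T x, x) \<in> S"
  shows "chi S = chi T"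
proof
  fix x
  show "chi S x = chi T x"
  proof (rule order_antisym)
    show "chi S x \<le> chi T x" using chi_le[OF S chi_T_mem] .
    show "chi T x \<le> chi S x" using chi_le[OF T] chi_mem[OF S] \<open>S \<subseteq> T\<close> by blast
  qed
qed

lemma transfer_system_le_rel: "transfer_system {(x::'a::finite_lattice, y). x \<le> y}"
  unfolding transfer_system_def refl_on_def antisym_def trans_def by (auto simp: le_infI2)

lemma gen_tr_least: "transfer_system S \<Longrightarrow> Q \<subseteq> S \<Longrightarrow> gen_tr Q \<subseteq> S"
  unfolding gen_tr_def by blast

lemma subset_gen_tr: "Q \<subseteq> gen_tr Q"
  unfolding gen_tr_def by blast

lemma transfer_system_gen_tr:
  fixes Q :: "('a::finite_lattice) rel"
  assumes "Q \<subseteq> {(x, y). x \<le> y}"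
  shows "transfer_system (gen_tr Q)"
proof -
  have below_le: "gen_tr Q \<subseteq> {(x, y). x \<le> y}"
    using gen_tr_least[OF transfer_system_le_rel assms] .
  show ?thesis unfolding transfer_system_def
  proof (intro conjI)
    show "refl (gen_tr Q)"
      unfolding gen_tr_def refl_on_def using transfer_system_refl by blast
    show "antisym (gen_tr Q)"
      using below_le unfolding antisym_def by (blast intro: order_antisym)
    show "trans (gen_tr Q)"
      unfolding gen_tr_def trans_def using transfer_system_trans by blast
    show "\<forall>x y. (x, y) \<in> gen_tr Q \<longrightarrow> x \<le> y"
      using below_le by blast
    show "\<forall>x y z. (x, z) \<in> gen_tr Q \<and> y \<le> z \<longrightarrow> (inf x y, y) \<in> gen_tr Q"
      unfolding gen_tr_def using transfer_system_restrict by blast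
  qed
qed

definition chi_graph :: "('a::finite_lattice) rel \<Rightarrow> 'a rel" where
  "chi_graph R = {(x, y). chi R y = x \<or> x = y}"

lemma chi_graph_subset: "transfer_system R \<Longrightarrow> chi_graph R \<subseteq> R"
  unfolding chi_graph_def using chi_mem transfer_system_refl by blast

lemma chi_graph_le: "transfer_system R \<Longrightarrow> chi_graph R \<subseteq> {(x, y). x \<le> y}"
  using chi_graph_subset transfer_system_le by blast

lemma chi_graph_cong: "chi S = chi R \<Longrightarrow> chi_graph S = chi_graph R"
  unfolding chi_graph_def by simp

theorem theorem2p12:
  fixes R :: "('a::finite_lattice) rel"
  assumes "R \<in> Tr"
  defines "Rt \<equiv> gen_tr {(x, y). chi R y = x \<or> x = y}"
  shows "Rt \<in> Tr \<and> chi Rt = chi R \<and>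
         (\<forall>S \<in> Tr. chi S = chi R \<longrightarrow> Rt \<subseteq> S)"
proof -
  have R: "transfer_system R" using assms(1) unfolding Tr_def by simp
  have Rt: "Rt = gen_tr (chi_graph R)" unfolding Rt_def chi_graph_def ..
  have least: "Rt \<subseteq> S" if S: "transfer_system S" and "chi S = chi R" for S
    unfolding Rt using gen_tr_least[OF S] chi_graph_subset[OF S] chi_graph_cong[OF \<open>chi S = chi R\<close>]
    by simp
  have Rt_ts: "transfer_system Rt"
    unfolding Rt using transfer_system_gen_tr[OF chi_graph_le[OF R]] .
  have "chi Rt = chi R"
  proof (rule chi_eq_if_between[OF Rt_ts R least[OF R refl]])
    show "(chi R x, x) \<in> Rt" for x
      unfolding Rt using subset_gen_tr[of "chi_graph R"] unfolding chi_graph_def by blast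
  qed
  with Rt_ts least show ?thesis unfolding Tr_def by simp
qed
end
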